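(* Let $T$ be a tree with $n$ vertices. Then $\mathrm{Min4PC}_T$ is isometrically $\ell_1$-embeddable in $\mathbb{R}^{n-1}$; that is, there is a map $\phi:\mathcal{V}_2\to\mathbb{R}^{n-1}$ such that for all $\{i,j\},\{s,t\}\in\mathcal{V}_2$, $\mathrm{Min4PC}_T(\{i,j\},\{s,t\})=\lVert\phi(\{i,j\})-\phi(\{s,t\})\rVert_1$.
   Context: For a tree $T$ with vertex set $V$, $d_{i,j}$ denotes the distance between vertices $i,j$, and $\mathcal{V}_2$ is the set of 2-element subsets of $V$. The matrix $\mathrm{Min4PC}_T$ is the $\binom n2\times\binom n2$ matrix with rows and columns indexed by $\mathcal{V}_2$ whose entry in row $\{i,j\}$ and column $\{k,l\}$ is $\min\{d_{i,l}+d_{j,k},\ d_{i,k}+d_{j,l},\ d_{i,j}+d_{k,l}\}$. *)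

theory Defs
  imports "HOL-Analysis.Analysis"
begin

definition is_walk :: "('a \<Rightarrow> 'a \<Rightarrow> bool) \<Rightarrow> 'a list \<Rightarrow> bool" where
  "is_walk E xs \<longleftrightarrow> xs \<noteq> [] \<and> (\<forall>i. Suc i < length xs \<longrightarrow> E (xs ! i) (xs ! Suc i))"

definition simple_graph :: "'a set \<Rightarrow> ('a \<Rightarrow> 'a \<Rightarrow> bool) \<Rightarrow> bool" where
  "simple_graph V E \<longleftrightarrow> finite V \<and> (\<forall>u v. E u v \<longrightarrow> u \<in> V \<and> v \<in> V)
     \<and> (\<forall>u v. E u v \<longrightarrow> E v u) \<and> (\<forall>u. \<not> E u u)"

definition connected_graph :: "'a set \<Rightarrow> ('a \<Rightarrow> 'a \<Rightarrow> bool) \<Rightarrow> bool" where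
  "connected_graph V E \<longleftrightarrow> V \<noteq> {} \<and>
     (\<forall>x\<in>V. \<forall>y\<in>V. \<exists>xs. is_walk E xs \<and> hd xs = x \<and> last xs = y)"

definition has_cycle :: "('a \<Rightarrow> 'a \<Rightarrow> bool) \<Rightarrow> bool" where
  "has_cycle E \<longleftrightarrow> (\<exists>xs. is_walk E xs \<and> distinct xs \<and> length xs \<ge> 3 \<and> E (last xs) (hd xs))"

definition is_tree :: "'a set \<Rightarrow> ('a \<Rightarrow> 'a \<Rightarrow> bool) \<Rightarrow> bool" where
  "is_tree V E \<longleftrightarrow> simple_graph V E \<and> connected_graph V E \<and> \<not> has_cycle E"

definition gdist :: "('a \<Rightarrow> 'a \<Rightarrow> bool) \<Rightarrow> 'a \<Rightarrow> 'a \<Rightarrow> nat" where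
  "gdist E x y = (LEAST n. \<exists>xs. is_walk E xs \<and> hd xs = x \<and> last xs = y \<and> length xs = Suc n)"

definition V2 :: "'a set \<Rightarrow> 'a set set" where
  "V2 V = {p. p \<subseteq> V \<and> card p = 2}"

definition min4pc :: "('a \<Rightarrow> 'a \<Rightarrow> bool) \<Rightarrow> 'a \<Rightarrow> 'a \<Rightarrow> 'a \<Rightarrow> 'a \<Rightarrow> real" where
  "min4pc E i j k l = real (min (gdist E i l + gdist E j k)
                          (min (gdist E i k + gdist E j l) (gdist E i j + gdist E k l)))"

end

theory Submission
  imports Defs
begin

(* Deleting a leaf l with neighbour p leaves a tree T', and
   d_T(u, w) = d_T'(u', w') + [exactly one of u, w is l], where u' is u with l replaced by p.
   Adding these indicators to the six distances shifts the four-point minimum by exactly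
   [the edge {l, p} separates exactly one of the pairs {i, j}, {s, t}], which is the l1-distance
   of the new coordinate X \<mapsto> [the edge {l, p} separates X]. *)

lemma is_walk_iff: "is_walk E xs \<longleftrightarrow> xs \<noteq> [] \<and> successively E xs"
  by (simp add: is_walk_def successively_conv_nth)

lemma is_walk_rev:
  assumes "\<And>u v. E u v \<Longrightarrow> E v u"
  shows "is_walk E (rev xs) \<longleftrightarrow> is_walk E xs"
proof -
  have "successively (\<lambda>x y. E y x) xs \<longleftrightarrow> successively E xs"
    by (rule successively_cong) (use assms in blast)+
  then show ?thesis by (simp add: is_walk_iff)
qed

lemma is_walk_join:
  assumes "is_walk E xs" "is_walk E ys" "last xs = hd ys"
  shows "is_walk E (xs @ tl ys)" "hd (xs @ tl ys) = hd xs" "last (xs @ tl ys) = last ys"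
proof -
  obtain y ys' where ys: "ys = y # ys'" using assms(2) by (cases ys) (auto simp: is_walk_iff)
  then show "is_walk E (xs @ tl ys)"
    using assms by (auto simp: is_walk_iff successively_append_iff successively_Cons)
  show "hd (xs @ tl ys) = hd xs" using assms(1) by (simp add: is_walk_iff)
  show "last (xs @ tl ys) = last ys" using assms ys by (simp add: is_walk_iff)
qed

lemma is_walk_mono:
  "is_walk E xs \<Longrightarrow> (\<And>u v. u \<in> set xs \<Longrightarrow> v \<in> set xs \<Longrightarrow> E u v \<Longrightarrow> F u v) \<Longrightarrow> is_walk F xs"
  unfolding is_walk_iff using successively_mono by blast

lemma gdist_le_walk: "is_walk E xs \<Longrightarrow> gdist E (hd xs) (last xs) \<le> length xs - 1"
  unfolding gdist_def by (rule Least_le) (auto simp: is_walk_iff)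

lemma shortest_walk_exists:
  assumes "is_walk E xs"
  obtains ys where "is_walk E ys" "hd ys = hd xs" "last ys = last xs"
    "length ys = Suc (gdist E (hd xs) (last xs))"
proof -
  have "\<exists>n ys. is_walk E ys \<and> hd ys = hd xs \<and> last ys = last xs \<and> length ys = Suc n"
    using assms by (intro exI[of _ "length xs - 1"] exI[of _ xs]) (auto simp: is_walk_iff)
  then have "\<exists>ys. is_walk E ys \<and> hd ys = hd xs \<and> last ys = last xs
      \<and> length ys = Suc (gdist E (hd xs) (last xs))"
    unfolding gdist_def by (rule LeastI_ex)
  then show thesis using that by blast
qed

lemma gdist_self [simp]: "gdist E x x = 0"
  using gdist_le_walk[of E "[x]"] by (simp add: is_walk_def)

lemma gdist_commute:
  assumes "\<And>u v. E u v \<Longrightarrow> E v u"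
  shows "gdist E x y = gdist E y x"
proof -
  have "is_walk E (rev xs) \<and> hd (rev xs) = y \<and> last (rev xs) = x \<and> length (rev xs) = Suc n"
    if "is_walk E xs \<and> hd xs = x \<and> last xs = y \<and> length xs = Suc n" for xs x y n
    using that is_walk_rev[of E xs, OF assms] by (auto simp: hd_rev last_rev)
  then have "(\<exists>xs. is_walk E xs \<and> hd xs = x \<and> last xs = y \<and> length xs = Suc n)
    \<longleftrightarrow> (\<exists>xs. is_walk E xs \<and> hd xs = y \<and> last xs = x \<and> length xs = Suc n)" for x y n
    by blast
  then show ?thesis unfolding gdist_def by simp
qed

lemma simple_graph_gdist_commute: "simple_graph V E \<Longrightarrow> gdist E x y = gdist E y x"
  by (rule gdist_commute) (auto simp: simple_graph_def)

lemma connected_graph_walk: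
  "connected_graph V E \<Longrightarrow> x \<in> V \<Longrightarrow> y \<in> V \<Longrightarrow> \<exists>xs. is_walk E xs \<and> hd xs = x \<and> last xs = y"
  unfolding connected_graph_def by blast

lemma connected_graph_shortest_walk:
  assumes "connected_graph V E" "x \<in> V" "y \<in> V"
  obtains xs where "is_walk E xs" "hd xs = x" "last xs = y" "length xs = Suc (gdist E x y)"
proof -
  obtain xs where xs: "is_walk E xs" "hd xs = x" "last xs = y"
    using connected_graph_walk[OF assms] by blast
  show thesis by (rule shortest_walk_exists[OF xs(1)]) (use that xs in simp)
qed

lemma gdist_triangle:
  assumes "connected_graph V E" "x \<in> V" "y \<in> V" "z \<in> V"
  shows "gdist E x z \<le> gdist E x y + gdist E y z"
proof -
  obtain xs where xs: "is_walk E xs" "hd xs = x" "last xs = y" "length xs = Suc (gdist E x y)"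
    using connected_graph_shortest_walk assms by metis
  obtain ys where ys: "is_walk E ys" "hd ys = y" "last ys = z" "length ys = Suc (gdist E y z)"
    using connected_graph_shortest_walk assms by metis
  have "gdist E x z \<le> length (xs @ tl ys) - 1"
    using gdist_le_walk[OF is_walk_join(1)[of E xs ys]] is_walk_join(2,3)[of E xs ys] xs ys by simp
  then show ?thesis using xs(4) ys(4) by simp
qed

lemma is_walk_take: "is_walk E xs \<Longrightarrow> 0 < n \<Longrightarrow> is_walk E (take n xs)"
  using successively_append_iff[of E "take n xs" "drop n xs"] by (simp add: is_walk_iff)

lemma acyclic_path_start_adj:
  assumes acyclic: "\<not> has_cycle E" and sym: "\<And>u v. E u v \<Longrightarrow> E v u" and irrefl: "\<And>u. \<not> E u u"
    and path: "is_walk E xs" "distinct xs" and xs: "xs = l # p # rest"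
    and adj: "E l y" "y \<in> set xs"
  shows "y = p"
proof (rule ccontr)
  assume "y \<noteq> p"
  obtain i where i: "i < length xs" "xs ! i = y" using adj(2) by (metis in_set_conv_nth)
  have "i \<noteq> 0" using i xs irrefl[of l] adj(1) by (metis nth_Cons_0)
  have "i \<noteq> 1" using i xs \<open>y \<noteq> p\<close> by auto
  define cycle where "cycle = take (Suc i) xs"
  have "is_walk E cycle" "distinct cycle" "3 \<le> length cycle"
    using is_walk_take[OF path(1)] path(2) i \<open>i \<noteq> 0\<close> \<open>i \<noteq> 1\<close> by (auto simp: cycle_def)
  moreover have "hd cycle = l" using xs by (simp add: cycle_def)
  moreover have "last cycle = y" using i by (simp add: cycle_def take_Suc_conv_app_nth)
  ultimately have "has_cycle E" using sym[OF adj(1)] unfolding has_cycle_def by metis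
  with acyclic show False ..
qed

lemma tree_has_leaf:
  assumes tree: "is_tree V E" and "2 \<le> card V"
  obtains l p where "E l p" "\<And>y. E l y \<Longrightarrow> y = p"
proof -
  have fin: "finite V" and inV: "\<And>u v. E u v \<Longrightarrow> u \<in> V \<and> v \<in> V"
    and sym: "\<And>u v. E u v \<Longrightarrow> E v u" and irrefl: "\<And>u. \<not> E u u"
    and conn: "connected_graph V E" and acyclic: "\<not> has_cycle E"
    using tree unfolding is_tree_def simple_graph_def by auto
  obtain u w where uw: "u \<in> V" "w \<in> V" "u \<noteq> w"
    using \<open>2 \<le> card V\<close> fin by (metis card_le_Suc0_iff_eq not_less_eq_eq numeral_2_eq_2)
  obtain zs where zs: "is_walk E zs" "hd zs = u" "last zs = w"
    using connected_graph_walk[OF conn uw(1,2)] by blast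
  then obtain a b zs' where "zs = a # b # zs'"
    using uw(3) by (cases zs rule: remdups_adj.cases) (auto simp: is_walk_iff)
  then have "E a b" using zs(1) by (simp add: is_walk_iff)
  define is_path where "is_path xs \<longleftrightarrow> is_walk E xs \<and> distinct xs \<and> set xs \<subseteq> V \<and> 2 \<le> length xs" for xs
  have "is_path [a, b]" using \<open>E a b\<close> inV irrefl by (auto simp: is_path_def is_walk_iff)
  moreover have "length xs < card V + 1" if "is_path xs" for xs
    using that distinct_card[of xs] card_mono[OF fin, of "set xs"] by (simp add: is_path_def)
  ultimately obtain xs where xs: "is_path xs" and longest: "\<And>ys. is_path ys \<Longrightarrow> length ys \<le> length xs"
    using ex_has_greatest_nat[of is_path "[a, b]" length "card V + 1"] by blast
  then obtain l p rest where xs_eq: "xs = l # p # rest"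
    unfolding is_path_def by (cases xs rule: remdups_adj.cases) auto
  have "E l p" using xs xs_eq by (simp add: is_path_def is_walk_iff)
  moreover have "y = p" if "E l y" for y
  proof (cases "y \<in> set xs")
    case True
    then show ?thesis
      using acyclic_path_start_adj[OF acyclic sym irrefl _ _ xs_eq that] xs by (simp add: is_path_def)
  next
    case False
    then have "is_path (y # xs)"
      using xs xs_eq sym[OF that] inV[OF that] by (auto simp: is_path_def is_walk_iff)
    with longest show ?thesis by fastforce
  qed
  ultimately show thesis using that by blast
qed

definition four_point_min :: "('a \<Rightarrow> 'a \<Rightarrow> nat) \<Rightarrow> 'a \<Rightarrow> 'a \<Rightarrow> 'a \<Rightarrow> 'a \<Rightarrow> nat" where
  "four_point_min d i j k l = min (d i l + d j k) (min (d i k + d j l) (d i j + d k l))"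

lemma min4pc_eq_four_point_min: "min4pc E i j k l = real (four_point_min (gdist E) i j k l)"
  by (simp add: min4pc_def four_point_min_def)

lemma four_point_min_pendant:
  fixes d :: "'b \<Rightarrow> 'b \<Rightarrow> nat" and d' :: "'a \<Rightarrow> 'a \<Rightarrow> nat" and g :: "'b \<Rightarrow> 'a"
  assumes zero: "\<And>x. d' x x = 0"
    and commute: "\<And>x y. x \<in> W \<Longrightarrow> y \<in> W \<Longrightarrow> d' x y = d' y x"
    and triangle: "\<And>x y z. x \<in> W \<Longrightarrow> y \<in> W \<Longrightarrow> z \<in> W \<Longrightarrow> d' x z \<le> d' x y + d' y z"
    and in_W: "g ` {i, j, s, t, l} \<subseteq> W"
    and d: "\<And>u w. u \<in> {i, j, s, t} \<Longrightarrow> w \<in> {i, j, s, t} \<Longrightarrow>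
      d u w = d' (g u) (g w) + of_bool ((u = l) \<noteq> (w = l))"
  shows "four_point_min d i j s t = four_point_min d' (g i) (g j) (g s) (g t)
    + of_bool (((i = l) \<noteq> (j = l)) \<noteq> ((s = l) \<noteq> (t = l)))"
proof -
  have via_l: "d' x y \<le> d' (g l) x + d' (g l) y" if "x \<in> W" "y \<in> W" for x y
    using triangle[OF that(1) _ that(2), of "g l"] commute[OF that(1), of "g l"] in_W by auto
  have W: "g i \<in> W" "g j \<in> W" "g s \<in> W" "g t \<in> W" using in_W by auto
  (* If two of the points are l, the pairing joining them gains 0 and the other two gain 2;
     by the triangle inequality through g l that pairing was already minimal. *)
  show ?thesis
    unfolding four_point_min_def
    using d[of i t] d[of j s] d[of i s] d[of j t] d[of i j] d[of s t]
      via_l[OF W(1) W(2)] via_l[OF W(1) W(3)] via_l[OF W(1) W(4)]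
      via_l[OF W(2) W(3)] via_l[OF W(2) W(4)] via_l[OF W(3) W(4)]
      commute[OF W(1) W(2)] commute[OF W(1) W(3)] commute[OF W(1) W(4)]
      commute[OF W(2) W(3)] commute[OF W(2) W(4)] commute[OF W(3) W(4)]
    by (cases "i = l"; cases "j = l"; cases "s = l"; cases "t = l") (auto simp: min_def zero)
qed

definition delete_vertex :: "('a \<Rightarrow> 'a \<Rightarrow> bool) \<Rightarrow> 'a \<Rightarrow> 'a \<Rightarrow> 'a \<Rightarrow> bool" where
  "delete_vertex E l u v \<longleftrightarrow> E u v \<and> u \<noteq> l \<and> v \<noteq> l"

context
  fixes V :: "'a set" and E :: "'a \<Rightarrow> 'a \<Rightarrow> bool" and l p :: 'a
  assumes tree: "is_tree V E" and leaf_adj: "E l p" and leaf_unique: "\<And>y. E l y \<Longrightarrow> y = p"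
begin

private lemma tree_simple: "simple_graph V E"
  and tree_connected: "connected_graph V E"
  and tree_sym: "E u v \<Longrightarrow> E v u"
  using tree by (auto simp: is_tree_def simple_graph_def)

lemma leaf_neighbour: "l \<in> V" "p \<in> V" "l \<noteq> p"
  using tree leaf_adj by (auto simp: is_tree_def simple_graph_def)

lemma shortest_walk_avoids_leaf:
  assumes walk: "is_walk E xs" and ends: "hd xs \<noteq> l" "last xs \<noteq> l"
    and shortest: "length xs = Suc (gdist E (hd xs) (last xs))"
  shows "l \<notin> set xs"
proof
  assume "l \<in> set xs"
  then obtain as bs where xs: "xs = as @ l # bs" by (metis split_list)
  have "as \<noteq> []" "bs \<noteq> []" using ends xs by auto
  then have "successively E as" "successively E bs" "E (last as) l" "E l (hd bs)"
    using walk xs by (auto simp: is_walk_iff successively_append_iff successively_Cons)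
  then have "last as = p" "hd bs = p" using leaf_unique tree_sym by auto
  then have short: "is_walk E (as @ tl bs)" "hd (as @ tl bs) = hd xs" "last (as @ tl bs) = last xs"
    using is_walk_join[of E as bs] \<open>as \<noteq> []\<close> \<open>bs \<noteq> []\<close> \<open>successively E as\<close> \<open>successively E bs\<close> xs
    by (auto simp: is_walk_iff)
  have "gdist E (hd xs) (last xs) \<le> length (as @ tl bs) - 1"
    using gdist_le_walk[OF short(1)] short(2,3) by simp
  then show False using shortest xs \<open>as \<noteq> []\<close> \<open>bs \<noteq> []\<close> by (cases as; cases bs) auto
qed

lemma delete_leaf_shortest_walk:
  assumes "u \<in> V - {l}" "w \<in> V - {l}"
  obtains xs where "is_walk (delete_vertex E l) xs" "hd xs = u" "last xs = w"
    "length xs = Suc (gdist E u w)"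
proof -
  obtain xs where xs: "is_walk E xs" "hd xs = u" "last xs = w" "length xs = Suc (gdist E u w)"
    using connected_graph_shortest_walk[OF tree_connected] assms by (metis DiffE)
  then have "l \<notin> set xs" using shortest_walk_avoids_leaf assms by blast
  then have "is_walk (delete_vertex E l) xs"
    using is_walk_mono[OF xs(1)] by (metis delete_vertex_def)
  with xs show thesis using that by blast
qed

lemma gdist_delete_leaf:
  assumes "u \<in> V - {l}" "w \<in> V - {l}"
  shows "gdist (delete_vertex E l) u w = gdist E u w"
proof (rule antisym)
  obtain xs where xs: "is_walk (delete_vertex E l) xs" "hd xs = u" "last xs = w"
    "length xs = Suc (gdist E u w)"
    using delete_leaf_shortest_walk[OF assms] by blast
  then show "gdist (delete_vertex E l) u w \<le> gdist E u w" using gdist_le_walk[OF xs(1)] by simp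
  obtain ys where ys: "is_walk (delete_vertex E l) ys" "hd ys = u" "last ys = w"
    "length ys = Suc (gdist (delete_vertex E l) u w)"
    by (rule shortest_walk_exists[OF xs(1)]) (use xs in simp)
  have "is_walk E ys" using is_walk_mono[OF ys(1)] by (simp add: delete_vertex_def)
  then show "gdist E u w \<le> gdist (delete_vertex E l) u w" using gdist_le_walk ys by fastforce
qed

lemma is_tree_delete_leaf: "is_tree (V - {l}) (delete_vertex E l)"
proof -
  have "simple_graph (V - {l}) (delete_vertex E l)"
    using tree_simple by (auto simp: simple_graph_def delete_vertex_def)
  moreover have "connected_graph (V - {l}) (delete_vertex E l)"
    unfolding connected_graph_def using leaf_neighbour delete_leaf_shortest_walk by blast
  moreover have "\<not> has_cycle (delete_vertex E l)"
    using tree is_walk_mono[of "delete_vertex E l" _ E]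
    by (auto simp: is_tree_def has_cycle_def delete_vertex_def)
  ultimately show ?thesis by (simp add: is_tree_def)
qed

lemma gdist_from_leaf:
  assumes "w \<in> V" "w \<noteq> l"
  shows "gdist E l w = Suc (gdist E p w)"
proof (rule antisym)
  obtain xs where xs: "is_walk E xs" "hd xs = p" "last xs = w" "length xs = Suc (gdist E p w)"
    using connected_graph_shortest_walk[OF tree_connected leaf_neighbour(2) assms(1)] by blast
  then have "is_walk E (l # xs)" using leaf_adj by (auto simp: is_walk_iff successively_Cons)
  then show "gdist E l w \<le> Suc (gdist E p w)" using gdist_le_walk[of E "l # xs"] xs by (auto simp: is_walk_iff)
next
  obtain xs where xs: "is_walk E xs" "hd xs = l" "last xs = w" "length xs = Suc (gdist E l w)"
    using connected_graph_shortest_walk[OF tree_connected leaf_neighbour(1) assms(1)] by blast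
  then obtain ys where ys: "xs = l # ys" by (cases xs) (auto simp: is_walk_iff)
  with xs(3) assms(2) have "ys \<noteq> []" by auto
  then have "is_walk E ys" "hd ys = p" "last ys = w"
    using xs ys leaf_unique by (auto simp: is_walk_iff successively_Cons)
  then have "gdist E p w \<le> length ys - 1" using gdist_le_walk[of E ys] by simp
  with xs(4) ys \<open>ys \<noteq> []\<close> show "Suc (gdist E p w) \<le> gdist E l w" by (cases ys) auto
qed

lemma gdist_contract_leaf:
  assumes "u \<in> V" "w \<in> V"
  shows "gdist E u w = gdist (delete_vertex E l) ((id(l := p)) u) ((id(l := p)) w)
    + of_bool ((u = l) \<noteq> (w = l))"
proof -
  have p: "p \<in> V - {l}" using leaf_neighbour by simp
  have "simple_graph (V - {l}) (delete_vertex E l)"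
    using is_tree_delete_leaf by (simp add: is_tree_def)
  then show ?thesis
    using assms gdist_delete_leaf[OF p] gdist_from_leaf gdist_delete_leaf
      simple_graph_gdist_commute[OF tree_simple, of l] simple_graph_gdist_commute[of "V - {l}" _ p]
    by auto
qed

lemma min4pc_contract_leaf:
  assumes "i \<in> V" "j \<in> V" "s \<in> V" "t \<in> V"
  shows "min4pc E i j s t = min4pc (delete_vertex E l) ((id(l := p)) i) ((id(l := p)) j)
      ((id(l := p)) s) ((id(l := p)) t)
    + of_bool (((i = l) \<noteq> (j = l)) \<noteq> ((s = l) \<noteq> (t = l)))"
proof -
  have tree': "simple_graph (V - {l}) (delete_vertex E l)" "connected_graph (V - {l}) (delete_vertex E l)"
    using is_tree_delete_leaf by (auto simp: is_tree_def)
  have "four_point_min (gdist E) i j s t = four_point_min (gdist (delete_vertex E l))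
      ((id(l := p)) i) ((id(l := p)) j) ((id(l := p)) s) ((id(l := p)) t)
    + of_bool (((i = l) \<noteq> (j = l)) \<noteq> ((s = l) \<noteq> (t = l)))"
  proof (rule four_point_min_pendant[where W = "V - {l}"])
    show "gdist (delete_vertex E l) x y = gdist (delete_vertex E l) y x" for x y
      by (rule simple_graph_gdist_commute[OF tree'(1)])
    show "gdist (delete_vertex E l) x z \<le> gdist (delete_vertex E l) x y + gdist (delete_vertex E l) y z"
      if "x \<in> V - {l}" "y \<in> V - {l}" "z \<in> V - {l}" for x y z
      using gdist_triangle[OF tree'(2) that] .
    show "id(l := p) ` {i, j, s, t, l} \<subseteq> V - {l}" using assms leaf_neighbour by auto
    show "gdist E u w = gdist (delete_vertex E l) ((id(l := p)) u) ((id(l := p)) w)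
      + of_bool ((u = l) \<noteq> (w = l))" if "u \<in> {i, j, s, t}" "w \<in> {i, j, s, t}" for u w
      using gdist_contract_leaf that assms by auto
  qed simp
  then show ?thesis by (simp add: min4pc_eq_four_point_min)
qed

lemma min4pc_l1_embedding_extend:
  fixes \<phi> :: "'a set \<Rightarrow> nat \<Rightarrow> real"
  assumes \<phi>: "\<forall>i\<in>V - {l}. \<forall>j\<in>V - {l}. \<forall>s\<in>V - {l}. \<forall>t\<in>V - {l}.
    min4pc (delete_vertex E l) i j s t = (\<Sum>k<m. \<bar>\<phi> {i, j} k - \<phi> {s, t} k\<bar>)"
  shows "\<exists>\<psi> :: 'a set \<Rightarrow> nat \<Rightarrow> real. \<forall>i\<in>V. \<forall>j\<in>V. \<forall>s\<in>V. \<forall>t\<in>V.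
    min4pc E i j s t = (\<Sum>k<Suc m. \<bar>\<psi> {i, j} k - \<psi> {s, t} k\<bar>)"
proof -
  let ?g = "id(l := p)"
  have g: "?g u \<in> V - {l}" if "u \<in> V" for u using that leaf_neighbour by simp
  (* the new coordinate records whether the edge {l, p} separates the pair *)
  define \<psi> where "\<psi> X k = (if k = m then of_bool (l \<in> X \<and> X \<noteq> {l}) else \<phi> (?g ` X) k)" for X k
  have new_coord: "\<psi> {u, w} m = of_bool ((u = l) \<noteq> (w = l))" for u w
    by (auto simp: \<psi>_def)
  have old_coord: "\<psi> {u, w} k = \<phi> {?g u, ?g w} k" if "k < m" for u w k
    using that by (simp add: \<psi>_def)
  have "min4pc E i j s t = (\<Sum>k<Suc m. \<bar>\<psi> {i, j} k - \<psi> {s, t} k\<bar>)"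
    if V: "i \<in> V" "j \<in> V" "s \<in> V" "t \<in> V" for i j s t
  proof -
    have "min4pc E i j s t = (\<Sum>k<m. \<bar>\<phi> {?g i, ?g j} k - \<phi> {?g s, ?g t} k\<bar>)
          + of_bool (((i = l) \<noteq> (j = l)) \<noteq> ((s = l) \<noteq> (t = l)))"
      using min4pc_contract_leaf[OF V] \<phi> g[OF V(1)] g[OF V(2)] g[OF V(3)] g[OF V(4)] by simp
    also have "\<dots> = (\<Sum>k<Suc m. \<bar>\<psi> {i, j} k - \<psi> {s, t} k\<bar>)"
      by (simp add: new_coord old_coord)
    finally show ?thesis .
  qed
  then show ?thesis by blast
qed

end

lemma tree_min4pc_l1_embedding:
  assumes "is_tree V E"
  shows "\<exists>\<phi> :: 'a set \<Rightarrow> nat \<Rightarrow> real. \<forall>i\<in>V. \<forall>j\<in>V. \<forall>s\<in>V. \<forall>t\<in>V.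
    min4pc E i j s t = (\<Sum>k<card V - 1. \<bar>\<phi> {i, j} k - \<phi> {s, t} k\<bar>)"
  using assms
proof (induction "card V" arbitrary: V E rule: less_induct)
  case less
  have "finite V" using less.prems by (simp add: is_tree_def simple_graph_def)
  show ?case
  proof (cases "card V < 2")
    case True
    with \<open>finite V\<close> have same: "i = j" if "i \<in> V" "j \<in> V" for i j
      using that card_le_Suc0_iff_eq by fastforce
    have "min4pc E i j s t = 0" if "i \<in> V" "j \<in> V" "s \<in> V" "t \<in> V" for i j s t
      using same[OF that(1,2)] same[OF that(1,3)] same[OF that(1,4)] by (simp add: min4pc_def)
    then show ?thesis using True by simp
  next
    case False
    then have "2 \<le> card V" by simp
    then obtain l p where leaf: "E l p" "\<And>y. E l y \<Longrightarrow> y = p"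
      by (rule tree_has_leaf[OF less.prems]) blast
    have "l \<in> V" using leaf_neighbour[OF less.prems leaf] by simp
    then have "card (V - {l}) < card V" by (rule card_Diff1_less[OF \<open>finite V\<close>])
    then obtain \<phi> :: "'a set \<Rightarrow> nat \<Rightarrow> real" where \<phi>: "\<forall>i\<in>V - {l}. \<forall>j\<in>V - {l}. \<forall>s\<in>V - {l}. \<forall>t\<in>V - {l}.
        min4pc (delete_vertex E l) i j s t = (\<Sum>k<card (V - {l}) - 1. \<bar>\<phi> {i, j} k - \<phi> {s, t} k\<bar>)"
      using less.hyps is_tree_delete_leaf[OF less.prems leaf] by blast
    have "card V - 1 = Suc (card (V - {l}) - 1)" using False \<open>l \<in> V\<close> \<open>finite V\<close> by simp
    then show ?thesis using min4pc_l1_embedding_extend[OF less.prems leaf \<phi>] by simp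
  qed
qed

theorem theorem1p4:
  fixes V :: "'a set" and E :: "'a \<Rightarrow> 'a \<Rightarrow> bool"
  assumes "is_tree V E"
  shows "\<exists>\<phi> :: 'a set \<Rightarrow> nat \<Rightarrow> real.
           \<forall>i\<in>V. \<forall>j\<in>V. \<forall>s\<in>V. \<forall>t\<in>V. i \<noteq> j \<longrightarrow> s \<noteq> t \<longrightarrow>
             min4pc E i j s t = (\<Sum>k<card V - 1. \<bar>\<phi> {i, j} k - \<phi> {s, t} k\<bar>)"
  using tree_min4pc_l1_embedding[OF assms] by blast

end
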